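(* Let $K$ be a field of characteristic $0$, let $E$ be the infinite-dimensional unitary Grassmann algebra over $K$ with even part $E_0$, let $A=\begin{pmatrix} E_0 & E\\ 0 & E\end{pmatrix}$, and let $F_n(A)=K\langle x_1,\dots,x_n\rangle/(K\langle x_1,\dots,x_n\rangle\cap T(A))$. Let $n\geq 2$ be even and $m\geq n+2$. Then the polynomial \[f_{m,n+1}^{(3)}=\sum_{\sigma\in S_{n+1}}(-1)^{\sigma}[x_{\sigma(1)},x_1,\dots,x_1][x_{\sigma(2)},x_{\sigma(3)}]\cdots[x_{\sigma(n)},x_{\sigma(n+1)}],\] where each first factor is the left-normed commutator of length $m-n$ consisting of $x_{\sigma(1)}$ followed by $m-n-1$ copies of $x_1$, is not a polynomial identity of $F_n(A)$.
   Context: All algebras are associative and unitary over $K$; $T(A)$ is the ideal of polynomial identities of $A$. $E$ is generated by anticommuting $e_1,e_2,\dots$ and $E_0$ is the span of basis products of even length. Commutators: $[a,b]=ab-ba$, $[a_1,\dots,a_k]=[[a_1,\dots,a_{k-1}],a_k]$; $(-1)^\sigma$ is the sign of $\sigma$. The polynomial has total degree $m$. *)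

theory Defs
  imports Main "HOL-Combinatorics.Permutations"
begin

text \<open>An element of E is a coefficient function on finite subsets S of nat;
  S = {i1 < ... < ik} stands for the basis monomial e_i1 ... e_ik.\<close>

type_synonym 'k grass = "nat set \<Rightarrow> 'k"

definition gsign :: "nat set \<Rightarrow> nat set \<Rightarrow> 'k::comm_ring_1" where
  "gsign S T = (-1) ^ card {(s,t). s \<in> S \<and> t \<in> T \<and> t < s}"

definition gmul :: "'k::comm_ring_1 grass \<Rightarrow> 'k grass \<Rightarrow> 'k grass" where
  "gmul x y = (\<lambda>U. if finite U then (\<Sum>S\<in>Pow U. gsign S (U - S) * x S * y (U - S)) else 0)"

definition gadd :: "'k::comm_ring_1 grass \<Rightarrow> 'k grass \<Rightarrow> 'k grass" where
  "gadd x y = (\<lambda>U. x U + y U)"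

definition gscale :: "'k::comm_ring_1 \<Rightarrow> 'k grass \<Rightarrow> 'k grass" where
  "gscale c x = (\<lambda>U. c * x U)"

definition gzero :: "'k::comm_ring_1 grass" where
  "gzero = (\<lambda>U. 0)"

definition gone :: "'k::comm_ring_1 grass" where
  "gone = (\<lambda>U. if U = {} then 1 else 0)"

definition Egr :: "'k::comm_ring_1 grass set" where
  "Egr = {x. finite {S. x S \<noteq> 0} \<and> (\<forall>S. x S \<noteq> 0 \<longrightarrow> finite S)}"

definition E0gr :: "'k::comm_ring_1 grass set" where
  "E0gr = {x \<in> Egr. \<forall>S. x S \<noteq> 0 \<longrightarrow> even (card S)}"

text \<open>(a, b, c) stands for the matrix with rows (a b) and (0 c).\<close>
type_synonym 'k utm = "'k grass \<times> 'k grass \<times> 'k grass"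

definition Acar :: "'k::comm_ring_1 utm set" where
  "Acar = {(a, b, c). a \<in> E0gr \<and> b \<in> Egr \<and> c \<in> Egr}"

definition amul :: "'k::comm_ring_1 utm \<Rightarrow> 'k utm \<Rightarrow> 'k utm" where
  "amul x y = (case x of (a, b, c) \<Rightarrow> case y of (a', b', c') \<Rightarrow>
      (gmul a a', gadd (gmul a b') (gmul b c'), gmul c c'))"

definition aadd :: "'k::comm_ring_1 utm \<Rightarrow> 'k utm \<Rightarrow> 'k utm" where
  "aadd x y = (case x of (a, b, c) \<Rightarrow> case y of (a', b', c') \<Rightarrow>
      (gadd a a', gadd b b', gadd c c'))"

definition ascale :: "'k::comm_ring_1 \<Rightarrow> 'k utm \<Rightarrow> 'k utm" where
  "ascale k x = (case x of (a, b, c) \<Rightarrow> (gscale k a, gscale k b, gscale k c))"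

definition asub :: "'k::comm_ring_1 utm \<Rightarrow> 'k utm \<Rightarrow> 'k utm" where
  "asub x y = aadd x (ascale (-1) y)"

definition azero :: "'k::comm_ring_1 utm" where
  "azero = (gzero, gzero, gzero)"

definition aone :: "'k::comm_ring_1 utm" where
  "aone = (gone, gzero, gone)"

definition asum :: "'i set \<Rightarrow> ('i \<Rightarrow> 'k::comm_ring_1 utm) \<Rightarrow> 'k utm" where
  "asum I F = ((\<lambda>S. \<Sum>i\<in>I. fst (F i) S),
               (\<lambda>S. \<Sum>i\<in>I. fst (snd (F i)) S),
               (\<lambda>S. \<Sum>i\<in>I. snd (snd (F i)) S))"

definition acomm :: "'k::comm_ring_1 utm \<Rightarrow> 'k utm \<Rightarrow> 'k utm" where
  "acomm x y = asub (amul x y) (amul y x)"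

fun lcomm :: "'k::comm_ring_1 utm \<Rightarrow> 'k utm \<Rightarrow> nat \<Rightarrow> 'k utm" where
  "lcomm y z 0 = y"
| "lcomm y z (Suc k) = acomm (lcomm y z k) z"

fun pairprod :: "(nat \<Rightarrow> 'k::comm_ring_1 utm) \<Rightarrow> (nat \<Rightarrow> nat) \<Rightarrow> nat \<Rightarrow> 'k utm" where
  "pairprod y s 0 = aone"
| "pairprod y s (Suc k) = amul (pairprod y s k) (acomm (y (s (2*k+2))) (y (s (2*k+3))))"

text \<open>Value of f^(3)_{m,n+1} at x_j := y j (j = 1..n+1).\<close>
definition fval :: "nat \<Rightarrow> nat \<Rightarrow> (nat \<Rightarrow> 'k::comm_ring_1 utm) \<Rightarrow> 'k utm" where
  "fval m n y = asum {s. s permutes {1..n+1}}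
     (\<lambda>s. ascale (of_int (sign s))
            (amul (lcomm (y (s 1)) (y 1) (m - n - 1)) (pairprod y s (n div 2))))"

datatype 'k ncpoly = Var nat | Const 'k | Add "'k ncpoly" "'k ncpoly" | Mul "'k ncpoly" "'k ncpoly"

fun ncvars :: "'k ncpoly \<Rightarrow> nat set" where
  "ncvars (Var i) = {i}"
| "ncvars (Const c) = {}"
| "ncvars (Add p q) = ncvars p \<union> ncvars q"
| "ncvars (Mul p q) = ncvars p \<union> ncvars q"

fun nceval :: "(nat \<Rightarrow> 'k::comm_ring_1 utm) \<Rightarrow> 'k ncpoly \<Rightarrow> 'k utm" where
  "nceval a (Var i) = a i"
| "nceval a (Const c) = ascale c aone"
| "nceval a (Add p q) = aadd (nceval a p) (nceval a q)"
| "nceval a (Mul p q) = amul (nceval a p) (nceval a q)"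

text \<open>A polynomial (given by its value function fv on (n+1)-tuples indexed 1..n+1)
  is a PI of F_n(A) = K<x_1..x_n>/(K<x_1..x_n> \<inter> T(A)) iff for every choice of
  elements p_j of K<x_1..x_n> (representatives of elements of F_n(A)), the
  substituted polynomial f(p_1,...,p_{n+1}) lies in T(A), i.e. vanishes under
  every evaluation of the variables in A.\<close>
definition PI_of_FnA :: "nat \<Rightarrow> ((nat \<Rightarrow> 'k::comm_ring_1 utm) \<Rightarrow> 'k utm) \<Rightarrow> bool" where
  "PI_of_FnA n fv \<longleftrightarrow>
     (\<forall>p :: nat \<Rightarrow> 'k ncpoly. (\<forall>j. ncvars (p j) \<subseteq> {1..n}) \<longrightarrow>
        (\<forall>a. (\<forall>i. a i \<in> Acar) \<longrightarrow> fv (\<lambda>j. nceval a (p j)) = azero))"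

end

theory Submission
  imports Defs
begin

text \<open>Substitute \<open>x\<^sub>1 \<mapsto> (-1, 0; e\<^sub>1)\<close>, \<open>x\<^sub>2 \<mapsto> (0, 1; e\<^sub>2)\<close>,
  \<open>x\<^sub>i \<mapsto> (0, 0; e\<^sub>i)\<close> for \<open>3 \<le> i \<le> n\<close>, and \<open>x\<^sub>n\<^sub>+\<^sub>1 \<mapsto> x\<^sub>1 x\<^sub>2 = (0, -1; e\<^sub>1 e\<^sub>2)\<close>,
  and read off the coefficient of \<open>e\<^sub>1 \<cdots> e\<^sub>n\<close> in the upper right entry of \<open>f\<close>.
  Commutators with \<open>x\<^sub>1\<close> kill the scalar upper left entry, so each summand contributes
  (upper right of the long commutator) times (lower right of the product of the short ones).
  If \<open>x\<^sub>n\<^sub>+\<^sub>1\<close> sits in a short commutator, that factor vanishes because \<open>e\<^sub>1 e\<^sub>2\<close> is central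
  in \<open>E\<close>. Otherwise \<open>\<sigma>(1) = n + 1\<close>: commuting with \<open>x\<^sub>1\<close> preserves the constant term \<open>-1\<close>
  of the upper right entry of \<open>x\<^sub>n\<^sub>+\<^sub>1\<close>, and the short commutators give
  \<open>2\<^sup>n\<^sup>/\<^sup>2 sign(\<sigma>) e\<^sub>1 \<cdots> e\<^sub>n\<close>. Hence the coefficient is \<open>-2\<^sup>n\<^sup>/\<^sup>2 n!\<close>, nonzero in
  characteristic 0.\<close>

section \<open>The sign of a permutation as a product over inversions\<close>

definition order_sign :: "nat \<Rightarrow> nat \<Rightarrow> 'a::comm_ring_1" where
  "order_sign u v = (if v < u then -1 else 1)"

definition ordered_pairs :: "nat set \<Rightarrow> (nat \<times> nat) set" where
  "ordered_pairs S = {(i, j). i \<in> S \<and> j \<in> S \<and> i < j}"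

definition inversion_sign :: "nat set \<Rightarrow> (nat \<Rightarrow> nat) \<Rightarrow> 'a::comm_ring_1" where
  "inversion_sign S f = (\<Prod>(i, j)\<in>ordered_pairs S. order_sign (f i) (f j))"

definition order_change :: "(nat \<Rightarrow> nat) \<Rightarrow> nat \<Rightarrow> nat \<Rightarrow> 'a::comm_ring_1" where
  "order_change p u v = (if (v < u) = (p v < p u) then 1 else -1)"

lemma finite_ordered_pairs: "finite S \<Longrightarrow> finite (ordered_pairs S)"
  unfolding ordered_pairs_def by (rule finite_subset[of _ "S \<times> S"]) auto

lemma order_sign_swap: "a \<noteq> b \<Longrightarrow> order_sign b a = - order_sign a b"
  by (auto simp: order_sign_def)

lemma order_sign_image: "order_sign (p u) (p v) = order_sign u v * order_change p u v"
  unfolding order_sign_def order_change_def by auto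

lemma order_change_commute: "u \<noteq> v \<Longrightarrow> p u \<noteq> p v \<Longrightarrow> order_change p u v = order_change p v u"
  unfolding order_change_def by (cases "u < v"; cases "p u < p v") auto

lemma prod_order_change_permutes:
  assumes q: "q permutes S" and p: "inj p"
  shows "(\<Prod>(i, j)\<in>ordered_pairs S. order_change p (q i) (q j))
       = (\<Prod>(u, v)\<in>ordered_pairs S. (order_change p u v :: 'a::comm_ring_1))"
proof (rule prod.reindex_bij_witness[where j = "\<lambda>(i, j). (min (q i) (q j), max (q i) (q j))"
      and i = "\<lambda>(u, v). (min (inv q u) (inv q v), max (inv q u) (inv q v))"])
  have inv_q: "\<And>x. inv q (q x) = x" "\<And>x. q (inv q x) = x"
    using permutes_inverses[OF q] by auto
  have in_S: "\<And>x. x \<in> S \<Longrightarrow> q x \<in> S" "\<And>x. x \<in> S \<Longrightarrow> inv q x \<in> S"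
    using permutes_in_image[OF q] permutes_in_image[OF permutes_inv[OF q]] by auto
  {
    fix a assume "a \<in> ordered_pairs S"
    then obtain i j where ij: "a = (i, j)" "i \<in> S" "j \<in> S" "i < j"
      unfolding ordered_pairs_def by auto
    have "q i \<noteq> q j" using ij inv_q by (metis less_irrefl)
    moreover have "p (q i) \<noteq> p (q j)" using calculation injD[OF p] by blast
    ultimately have "order_change p (q j) (q i) = (order_change p (q i) (q j) :: 'a)"
      by (rule order_change_commute[symmetric])
    then show "(case (\<lambda>(i, j). (min (q i) (q j), max (q i) (q j))) a of (u, v) \<Rightarrow> order_change p u v) =
        (case a of (i, j) \<Rightarrow> (order_change p (q i) (q j) :: 'a))"
      using ij by (auto simp: min_def max_def)
    show "(\<lambda>(u, v). (min (inv q u) (inv q v), max (inv q u) (inv q v)))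
          ((\<lambda>(i, j). (min (q i) (q j), max (q i) (q j))) a) = a"
      and "(\<lambda>(i, j). (min (q i) (q j), max (q i) (q j))) a \<in> ordered_pairs S"
      using ij inv_q in_S \<open>q i \<noteq> q j\<close> by (auto simp: ordered_pairs_def min_def max_def)
  next
    fix b assume "b \<in> ordered_pairs S"
    then obtain u v where uv: "b = (u, v)" "u \<in> S" "v \<in> S" "u < v"
      unfolding ordered_pairs_def by auto
    have "inv q u \<noteq> inv q v" using uv inv_q by (metis less_irrefl)
    then show "(\<lambda>(i, j). (min (q i) (q j), max (q i) (q j)))
          ((\<lambda>(u, v). (min (inv q u) (inv q v), max (inv q u) (inv q v))) b) = b"
      and "(\<lambda>(u, v). (min (inv q u) (inv q v), max (inv q u) (inv q v))) b \<in> ordered_pairs S"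
      using uv inv_q in_S by (auto simp: ordered_pairs_def min_def max_def)
  }
qed

lemma inversion_sign_compose:
  assumes p: "p permutes S" and q: "q permutes S"
  shows "inversion_sign S (p \<circ> q) = inversion_sign S p * (inversion_sign S q :: 'a::comm_ring_1)"
proof -
  have "inversion_sign S (p \<circ> q)
      = (\<Prod>(i, j)\<in>ordered_pairs S. order_sign (q i) (q j) * (order_change p (q i) (q j) :: 'a))"
    unfolding inversion_sign_def by (intro prod.cong) (auto simp: order_sign_image)
  also have "\<dots> = inversion_sign S q * (\<Prod>(i, j)\<in>ordered_pairs S. order_change p (q i) (q j))"
    unfolding inversion_sign_def prod.distrib[symmetric] by (intro prod.cong) auto
  also have "(\<Prod>(i, j)\<in>ordered_pairs S. order_change p (q i) (q j)) = (\<Prod>(u, v)\<in>ordered_pairs S. order_change p u v)"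
    using prod_order_change_permutes[OF q permutes_inj[OF p]] .
  also have "\<dots> = inversion_sign S p"
    unfolding inversion_sign_def
    by (intro prod.cong) (auto simp: ordered_pairs_def order_sign_image order_sign_def)
  finally show ?thesis by (simp add: o_def mult.commute)
qed

lemma inversion_sign_id: "inversion_sign S id = 1"
  unfolding inversion_sign_def by (intro prod.neutral) (auto simp: ordered_pairs_def order_sign_def)

lemma inversion_sign_transpose_Suc:
  assumes "finite S" "a \<in> S" "Suc a \<in> S"
  shows "inversion_sign S (transpose a (Suc a)) = -1"
proof -
  have "inversion_sign S (transpose a (Suc a)) = (\<Prod>x\<in>ordered_pairs S. if x = (a, Suc a) then -1 else 1)"
    unfolding inversion_sign_def
    by (intro prod.cong refl)
       (auto simp: ordered_pairs_def order_sign_def transpose_def split: if_splits)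
  also have "\<dots> = -1"
    using assms by (subst prod.delta) (auto simp: finite_ordered_pairs, auto simp: ordered_pairs_def)
  finally show ?thesis .
qed

lemma inversion_sign_transpose:
  assumes "lo \<le> a" "a < b" "b < hi"
  shows "inversion_sign {lo..<hi} (transpose a b) = (-1 :: 'a::comm_ring_1)"
proof -
  have "Suc a \<le> b" using assms(2) by simp
  then have "b < hi \<longrightarrow> inversion_sign {lo..<hi} (transpose a b) = (-1 :: 'a)"
  proof (induction b rule: dec_induct)
    case base
    show ?case using assms(1) by (auto intro: inversion_sign_transpose_Suc)
  next
    case (step c)
    have conj: "transpose a (Suc c) = transpose c (Suc c) \<circ> transpose a c \<circ> transpose c (Suc c)"
      using step.hyps by (intro ext) (simp add: transpose_def)
    show ?case
    proof
      assume "Suc c < hi"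
      then have perm: "transpose a c permutes {lo..<hi}" "transpose c (Suc c) permutes {lo..<hi}"
        using assms(1) step.hyps by (auto intro: permutes_swap_id)
      have "inversion_sign {lo..<hi} (transpose c (Suc c)) = (-1 :: 'a)"
        using assms(1) step.hyps \<open>Suc c < hi\<close> by (intro inversion_sign_transpose_Suc) auto
      then show "inversion_sign {lo..<hi} (transpose a (Suc c)) = (-1 :: 'a)"
        using step.IH \<open>Suc c < hi\<close> perm
        by (simp add: conj inversion_sign_compose permutes_compose)
    qed
  qed
  then show ?thesis using assms(3) by blast
qed

lemma of_int_sign_eq_inversion_sign:
  assumes "p permutes {lo..<hi}"
  shows "of_int (sign p) = (inversion_sign {lo..<hi} p :: 'a::comm_ring_1)"
  using assms finite_atLeastLessThan
proof (induction rule: permutes_induct)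
  case id
  then show ?case by (simp add: inversion_sign_id[unfolded id_def])
next
  case (swap a b p)
  have "inversion_sign {lo..<hi} (transpose a b) = (-1 :: 'a)"
    using swap.hyps inversion_sign_transpose[of lo a b hi] inversion_sign_transpose[of lo b a hi]
    by (cases "a < b") (auto simp: transpose_commute)
  moreover have "permutation p"
    using swap.hyps(4) by (auto simp: permutation_permutes)
  then have "sign (transpose a b \<circ> p) = - sign p"
    using swap.hyps(3) by (simp add: sign_compose permutation_swap_id sign_swap_id)
  moreover have "inversion_sign {lo..<hi} (transpose a b \<circ> p)
      = inversion_sign {lo..<hi} (transpose a b) * (inversion_sign {lo..<hi} p :: 'a)"
    using swap.hyps by (intro inversion_sign_compose permutes_swap_id) auto
  ultimately show ?case
    using swap.IH by (simp only: of_int_minus mult_minus1)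
qed

lemma inversion_sign_atLeastLessThan:
  "inversion_sign {lo..<hi} f = (\<Prod>b\<in>{lo..<hi}. \<Prod>a\<in>{lo..<b}. (order_sign (f a) (f b) :: 'a::comm_ring_1))"
proof -
  have pairs: "ordered_pairs {lo..<hi} = (\<lambda>(b, a). (a, b)) ` (SIGMA b:{lo..<hi}. {lo..<b})"
    unfolding ordered_pairs_def by (auto simp: image_iff)
  have "inj_on (\<lambda>(b::nat, a::nat). (a, b)) X" for X by (auto simp: inj_on_def)
  then show ?thesis
    unfolding inversion_sign_def pairs
    by (subst prod.reindex) (auto simp: prod.Sigma case_prod_unfold)
qed

lemma inversion_sign_atLeastLessThan_Suc:
  assumes "lo \<le> hi"
  shows "inversion_sign {lo..<Suc hi} f
       = inversion_sign {lo..<hi} f * (\<Prod>a\<in>{lo..<hi}. (order_sign (f a) (f hi) :: 'a::comm_ring_1))"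
  using assms by (simp add: inversion_sign_atLeastLessThan)

lemma inversion_sign_atLeastLessThan_Suc_Suc:
  assumes "lo \<le> h"
  shows "inversion_sign {lo..<Suc (Suc h)} f = inversion_sign {lo..<h} f
      * (\<Prod>i\<in>{lo..<h}. order_sign (f i) (f h) * order_sign (f i) (f (Suc h))) * (order_sign (f h) (f (Suc h)) :: 'a::comm_ring_1)"
  using assms by (simp add: inversion_sign_atLeastLessThan_Suc prod.atLeastLessThan_Suc prod.distrib ac_simps)

lemma inversion_sign_first_max:
  assumes "lo < hi" and max: "\<And>b. Suc lo \<le> b \<Longrightarrow> b < hi \<Longrightarrow> f b < f lo"
  shows "inversion_sign {lo..<hi} f = (-1) ^ (hi - Suc lo) * (inversion_sign {Suc lo..<hi} f :: 'a::comm_ring_1)"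
proof -
  have "inversion_sign {lo..<hi} f = (\<Prod>b\<in>{Suc lo..<hi}. \<Prod>a\<in>{lo..<b}. (order_sign (f a) (f b) :: 'a))"
    using assms(1) by (simp add: inversion_sign_atLeastLessThan prod.atLeast_Suc_lessThan)
  also have "\<dots> = (\<Prod>b\<in>{Suc lo..<hi}. (-1) * (\<Prod>a\<in>{Suc lo..<b}. order_sign (f a) (f b)))"
    using max by (intro prod.cong refl) (simp add: prod.atLeast_Suc_lessThan order_sign_def)
  also have "\<dots> = (-1) ^ (hi - Suc lo) * inversion_sign {Suc lo..<hi} f"
    unfolding prod.distrib by (simp add: inversion_sign_atLeastLessThan)
  finally show ?thesis .
qed

section \<open>Monomials of the Grassmann algebra\<close>

definition gmonom :: "'k::comm_ring_1 \<Rightarrow> nat set \<Rightarrow> 'k grass" where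
  "gmonom c S = (\<lambda>U. if U = S then c else 0)"

definition gcomm :: "'k::comm_ring_1 grass \<Rightarrow> 'k grass \<Rightarrow> 'k grass" where
  "gcomm x y = gadd (gmul x y) (gscale (-1) (gmul y x))"

lemma gzero_apply [simp]: "gzero U = 0"
  by (simp add: gzero_def)

lemma gone_eq_gmonom: "gone = gmonom 1 {}"
  by (auto simp: gone_def gmonom_def)

lemma gmonom_0 [simp]: "gmonom 0 S = gzero"
  by (auto simp: gzero_def gmonom_def)

lemma gadd_gzero_left [simp]: "gadd gzero x = x"
  and gadd_gzero_right [simp]: "gadd x gzero = x"
  by (simp_all add: gadd_def gzero_def)

lemma gscale_gzero [simp]: "gscale c gzero = gzero"
  by (simp add: gscale_def gzero_def)

lemma gmul_gzero_left [simp]: "gmul gzero x = gzero"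
  and gmul_gzero_right [simp]: "gmul x gzero = gzero"
  by (auto simp: gmul_def gzero_def fun_eq_iff)

lemma gadd_gmonom: "gadd (gmonom c S) (gmonom d S) = gmonom (c + d) S"
  by (auto simp: gadd_def gmonom_def)

lemma gscale_gmonom: "gscale k (gmonom c S) = gmonom (k * c) S"
  by (auto simp: gscale_def gmonom_def)

lemma gmonom_in_Egr: "finite S \<Longrightarrow> gmonom c S \<in> Egr"
  unfolding Egr_def gmonom_def by (auto intro: finite_subset[of _ "{S}"])

lemma gsign_empty_left [simp]: "gsign {} T = 1"
  and gsign_empty_right [simp]: "gsign S {} = 1"
  by (simp_all add: gsign_def)

lemma gsign_eq_prod:
  assumes "finite S" "finite T"
  shows "gsign S T = (\<Prod>u\<in>S. \<Prod>v\<in>T. (order_sign u v :: 'k::comm_ring_1))"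
proof -
  have "{(s, t). s \<in> S \<and> t \<in> T \<and> t < s} = {z \<in> S \<times> T. snd z < fst z}" by auto
  then have "gsign S T = (\<Prod>z\<in>{z \<in> S \<times> T. snd z < fst z}. (-1 :: 'k))"
    unfolding gsign_def by simp
  also have "\<dots> = (\<Prod>z\<in>S \<times> T. if snd z < fst z then -1 else 1)"
    using assms by (subst prod.inter_filter) auto
  also have "\<dots> = (\<Prod>u\<in>S. \<Prod>v\<in>T. order_sign u v)"
    unfolding order_sign_def by (subst prod.cartesian_product) (simp add: case_prod_unfold)
  finally show ?thesis .
qed

lemma gmul_gmonom:
  assumes "finite S" "finite T"
  shows "gmul (gmonom c S) (gmonom d T) = gmonom (if S \<inter> T = {} then c * d * gsign S T else 0) (S \<union> T)"
proof
  fix U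
  show "gmul (gmonom c S) (gmonom d T) U = gmonom (if S \<inter> T = {} then c * d * gsign S T else 0) (S \<union> T) U"
  proof (cases "finite U")
    case False
    then show ?thesis using assms by (auto simp: gmul_def gmonom_def)
  next
    case True
    have "gmul (gmonom c S) (gmonom d T) U
        = (\<Sum>S'\<in>Pow U. if S' = S then gsign S (U - S) * c * gmonom d T (U - S) else 0)"
      unfolding gmul_def if_P[OF True] by (intro sum.cong) (auto simp: gmonom_def)
    also have "\<dots> = (if S \<subseteq> U then gsign S (U - S) * c * gmonom d T (U - S) else 0)"
      using True by (subst sum.delta) auto
    also have "\<dots> = gmonom (if S \<inter> T = {} then c * d * gsign S T else 0) (S \<union> T) U"
    proof (cases "S \<subseteq> U \<and> U - S = T")
      case True
      then have "U = S \<union> T" "S \<inter> T = {}" by auto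
      then show ?thesis using True by (auto simp: gmonom_def)
    next
      case False
      then have "U \<noteq> S \<union> T \<or> S \<inter> T \<noteq> {}" by auto
      then show ?thesis using False by (auto simp: gmonom_def)
    qed
    finally show ?thesis .
  qed
qed

lemma gsign_image_doubleton:
  assumes "inj_on \<sigma> I" "finite I" "u \<noteq> v"
  shows "gsign (\<sigma> ` I) {u, v} = (\<Prod>i\<in>I. order_sign (\<sigma> i) u * (order_sign (\<sigma> i) v :: 'k::comm_ring_1))"
  using assms by (simp add: gsign_eq_prod prod.reindex)

lemma gmul_apply_empty: "gmul x y {} = x {} * y {}"
  by (simp add: gmul_def)

lemma gmul_gmonom_apply_self:
  assumes "finite T"
  shows "gmul x (gmonom c T) T = x {} * c"
proof -
  have "gmul x (gmonom c T) T = (\<Sum>S\<in>Pow T. if S = {} then x {} * c else 0)"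
    unfolding gmul_def if_P[OF assms] by (intro sum.cong) (auto simp: gmonom_def)
  also have "\<dots> = x {} * c" using assms by (subst sum.delta) auto
  finally show ?thesis .
qed

lemma gcomm_scalar_right: "gcomm x (gmonom c {}) = gzero"
proof -
  have "gmul (gmonom c {}) x U = gmul x (gmonom c {}) U" for U
  proof (cases "finite U")
    case True
    have "gmul (gmonom c {}) x U = (\<Sum>S\<in>Pow U. if S = {} then c * x U else 0)"
      unfolding gmul_def if_P[OF True] by (intro sum.cong) (auto simp: gmonom_def)
    moreover have "gmul x (gmonom c {}) U = (\<Sum>S\<in>Pow U. if S = U then x U * c else 0)"
      unfolding gmul_def if_P[OF True] by (intro sum.cong) (auto simp: gmonom_def)
    ultimately show ?thesis using True by (simp add: mult.commute)
  qed (simp add: gmul_def)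
  then show ?thesis by (simp add: gcomm_def gadd_def gscale_def gzero_def fun_eq_iff)
qed

lemma gcomm_singletons:
  assumes "a \<noteq> b"
  shows "gcomm (gmonom 1 {a}) (gmonom 1 {b}) = (gmonom (2 * order_sign a b) {a, b} :: 'k::comm_ring_1 grass)"
proof -
  have sets: "{a} \<union> {b} = {a, b}" "{b} \<union> {a} = {a, b}" "{a} \<inter> {b} = {}" "{b} \<inter> {a} = {}"
    using assms by auto
  have "gmul (gmonom 1 {a}) (gmonom 1 {b}) = (gmonom (order_sign a b) {a, b} :: 'k grass)"
    using gmul_gmonom[of "{a}" "{b}" 1 1] by (simp add: sets gsign_eq_prod insert_commute)
  moreover have "gmul (gmonom 1 {b}) (gmonom 1 {a}) = (gmonom (- order_sign a b) {a, b} :: 'k grass)"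
    using gmul_gmonom[of "{b}" "{a}" 1 1] by (simp add: sets gsign_eq_prod order_sign_swap[OF assms] insert_commute)
  ultimately show ?thesis by (simp add: gcomm_def gscale_gmonom gadd_gmonom)
qed

lemma gcomm_doubleton_singleton:
  assumes "a \<noteq> b"
  shows "gcomm (gmonom c {a, b}) (gmonom d {x}) = (gzero :: 'k::comm_ring_1 grass)"
    and "gcomm (gmonom d {x}) (gmonom c {a, b}) = (gzero :: 'k grass)"
proof -
  have "gsign {a, b} {x} = (gsign {x} {a, b} :: 'k)" if "x \<notin> {a, b}"
    using assms that by (simp add: gsign_eq_prod order_sign_def)
  then show "gcomm (gmonom c {a, b}) (gmonom d {x}) = (gzero :: 'k grass)"
    and "gcomm (gmonom d {x}) (gmonom c {a, b}) = (gzero :: 'k grass)"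
    by (cases "x \<in> {a, b}";
        simp add: gcomm_def gmul_gmonom gscale_gmonom gadd_gmonom insert_commute ac_simps)+
qed

lemma amul_components:
  "fst (amul x y) = gmul (fst x) (fst y)"
  "fst (snd (amul x y)) = gadd (gmul (fst x) (fst (snd y))) (gmul (fst (snd x)) (snd (snd y)))"
  "snd (snd (amul x y)) = gmul (snd (snd x)) (snd (snd y))"
  by (cases x; cases y; simp add: amul_def)+

lemma fst_snd_ascale: "fst (snd (ascale c x)) = gscale c (fst (snd x))"
  by (cases x) (simp add: ascale_def)

lemma acomm_components:
  "fst (acomm x y) = gcomm (fst x) (fst y)"
  "fst (snd (acomm x y)) = gadd (gadd (gmul (fst x) (fst (snd y))) (gmul (fst (snd x)) (snd (snd y))))
      (gscale (-1) (gadd (gmul (fst y) (fst (snd x))) (gmul (fst (snd y)) (snd (snd x)))))"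
  "snd (snd (acomm x y)) = gcomm (snd (snd x)) (snd (snd y))"
  by (cases x; cases y; simp add: acomm_def asub_def aadd_def ascale_def amul_def gcomm_def)+

lemma fst_lcomm_scalar:
  assumes "0 < k" "fst z = gmonom c {}"
  shows "fst (lcomm x z k) = gzero"
  using assms by (cases k) (auto simp: acomm_components gcomm_scalar_right)

lemma fst_snd_lcomm_apply_empty:
  assumes "fst (snd z) = gzero"
  shows "fst (snd (lcomm x z k)) {} = (snd (snd z) {} - fst z {}) ^ k * fst (snd x) {}"
  using assms
  by (induction k) (simp_all add: acomm_components gadd_def gscale_def gmul_apply_empty gzero_def algebra_simps)

lemma snd_snd_pairprod:
  assumes "inj_on \<sigma> {2..<2*j+2}"
    and "\<And>i. i \<in> {2..<2*j+2} \<Longrightarrow> snd (snd (y (\<sigma> i))) = gmonom 1 {\<sigma> i}"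
  shows "snd (snd (pairprod y \<sigma> j))
       = (gmonom (2 ^ j * inversion_sign {2..<2*j+2} \<sigma>) (\<sigma> ` {2..<2*j+2}) :: 'k::comm_ring_1 grass)"
  using assms
proof (induction j)
  case 0
  then show ?case by (simp add: aone_def gone_eq_gmonom inversion_sign_def ordered_pairs_def)
next
  case (Suc j)
  define u where "u = \<sigma> (2*j+2)"
  define v where "v = \<sigma> (2*j+3)"
  define A where "A = \<sigma> ` {2..<2*j+2}"
  have dom: "{2..<2 * Suc j + 2} = {2..<2*j+2} \<union> {2*j+2, 2*j+3}" by auto
  have "u \<noteq> v" "A \<inter> {u, v} = {}"
    using Suc.prems(1) unfolding u_def v_def A_def dom by (auto simp: inj_on_def)
  have IH: "snd (snd (pairprod y \<sigma> j)) = (gmonom (2 ^ j * inversion_sign {2..<2*j+2} \<sigma>) A :: 'k grass)"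
    unfolding A_def using Suc.prems by (intro Suc.IH) (auto simp: dom intro: inj_on_subset)
  have last: "snd (snd (acomm (y u) (y v))) = (gmonom (2 * order_sign u v) {u, v} :: 'k grass)"
    using Suc.prems(2)[of "2*j+2"] Suc.prems(2)[of "2*j+3"] \<open>u \<noteq> v\<close>
    by (simp add: acomm_components gcomm_singletons u_def v_def)
  have inj: "inj_on \<sigma> {2..<2*j+2}"
    using Suc.prems(1) by (rule inj_on_subset) (auto simp: dom)
  have gsign_Auv: "gsign A {u, v} = (\<Prod>i\<in>{2..<2*j+2}. order_sign (\<sigma> i) u * (order_sign (\<sigma> i) v :: 'k))"
    unfolding A_def using gsign_image_doubleton[OF inj _ \<open>u \<noteq> v\<close>] by simp
  have "2 * Suc j + 2 = Suc (Suc (2*j+2))" "v = \<sigma> (Suc (2*j+2))"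
    by (simp_all add: v_def numeral_3_eq_3)
  then have inversion_Suc: "inversion_sign {2..<2 * Suc j + 2} \<sigma> = inversion_sign {2..<2*j+2} \<sigma>
      * (\<Prod>i\<in>{2..<2*j+2}. order_sign (\<sigma> i) u * order_sign (\<sigma> i) v) * (order_sign u v :: 'k)"
    unfolding u_def by (simp only: inversion_sign_atLeastLessThan_Suc_Suc[of 2 "2*j+2"] le_add2)
  have coeff: "2 ^ j * inversion_sign {2..<2*j+2} \<sigma> * (2 * order_sign u v) * gsign A {u, v}
      = (2 ^ Suc j * inversion_sign {2..<2 * Suc j + 2} \<sigma> :: 'k)"
    unfolding gsign_Auv inversion_Suc by (simp only: power_Suc ac_simps)
  have img: "\<sigma> ` {2..<2 * Suc j + 2} = A \<union> {u, v}"
    unfolding dom A_def u_def v_def by auto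
  have "snd (snd (pairprod y \<sigma> (Suc j))) = gmul (snd (snd (pairprod y \<sigma> j))) (snd (snd (acomm (y u) (y v))))"
    by (simp only: pairprod.simps amul_components u_def v_def)
  also have "\<dots> = gmul (gmonom (2 ^ j * inversion_sign {2..<2*j+2} \<sigma>) A) (gmonom (2 * order_sign u v) {u, v})"
    by (simp only: IH last)
  also have "\<dots> = gmonom (2 ^ j * inversion_sign {2..<2*j+2} \<sigma> * (2 * order_sign u v) * gsign A {u, v}) (A \<union> {u, v})"
    using \<open>A \<inter> {u, v} = {}\<close> by (simp add: gmul_gmonom A_def)
  finally show ?case by (simp only: coeff img)
qed

lemma snd_snd_pairprod_gzero:
  assumes "i < j" "snd (snd (acomm (y (\<sigma> (2*i+2))) (y (\<sigma> (2*i+3))))) = gzero"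
  shows "snd (snd (pairprod y \<sigma> j)) = gzero"
  using assms by (induction j) (auto simp: amul_components less_Suc_eq)

section \<open>The non-vanishing evaluation\<close>

definition witness_gen :: "nat \<Rightarrow> 'k::comm_ring_1 utm" where
  "witness_gen i =
    (if i = 1 then (gmonom (-1) {}, gzero, gmonom 1 {1})
     else if i = 2 then (gzero, gmonom 1 {}, gmonom 1 {2})
     else (gzero, gzero, gmonom 1 {i}))"

text \<open>Indices outside \<open>1..n+1\<close> are sent to \<open>x\<^sub>1\<close>; they never occur in \<open>fval\<close>.\<close>

definition witness_poly :: "nat \<Rightarrow> nat \<Rightarrow> 'k ncpoly" where
  "witness_poly n j = (if j = n + 1 then Mul (Var 1) (Var 2) else if 1 \<le> j \<and> j \<le> n then Var j else Var 1)"

definition witness :: "nat \<Rightarrow> nat \<Rightarrow> 'k::comm_ring_1 utm" where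
  "witness n j = nceval witness_gen (witness_poly n j)"

lemma witness_gen_in_Acar: "(witness_gen i :: 'k::comm_ring_1 utm) \<in> Acar"
proof -
  have "gzero \<in> E0gr" "gzero \<in> Egr" "gmonom c {} \<in> E0gr" for c :: 'k
    using gmonom_in_Egr[of "{}" c] by (auto simp: E0gr_def Egr_def gzero_def gmonom_def)
  then show ?thesis by (auto simp: witness_gen_def Acar_def gmonom_in_Egr)
qed

lemma ncvars_witness_poly: "2 \<le> n \<Longrightarrow> ncvars (witness_poly n j) \<subseteq> {1..n}"
  by (auto simp: witness_poly_def)

lemma witness_var: "1 \<le> j \<Longrightarrow> j \<le> n \<Longrightarrow> witness n j = witness_gen j"
  by (simp add: witness_def witness_poly_def)

lemma witness_last: "witness n (n + 1) = (gzero, gmonom (-1) {}, gmonom 1 {1, 2} :: 'k::comm_ring_1 grass)"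
proof -
  have "gmul (gmonom 1 {1}) (gmonom 1 {2}) = (gmonom 1 {1, 2} :: 'k grass)"
    by (simp add: gmul_gmonom gsign_eq_prod order_sign_def insert_commute)
  then show ?thesis
    by (simp add: witness_def witness_poly_def witness_gen_def amul_def gmul_gmonom)
qed

lemma snd_snd_witness: "j \<in> {1..n} \<Longrightarrow> snd (snd (witness n j)) = gmonom 1 {j}"
  by (auto simp: witness_var witness_gen_def)

lemma snd_snd_pairprod_witness_last_first:
  assumes \<sigma>: "\<sigma> permutes {1..n+1}" "\<sigma> 1 = n + 1" and "even n"
  shows "snd (snd (pairprod (witness n) \<sigma> (n div 2))) = (gmonom (2 ^ (n div 2) * of_int (sign \<sigma>)) {1..n} :: 'k::comm_ring_1 grass)"
proof -
  have inj: "inj_on \<sigma> {2..<n+2}"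
    using permutes_inj[OF \<sigma>(1)] by (auto intro: inj_on_subset)
  have "{2..<n+2} = {1..<n+2} - {1}" by auto
  then have "\<sigma> ` {2..<n+2} = \<sigma> ` {1..<n+2} - {\<sigma> 1}"
    by (simp add: inj_on_image_set_diff[OF permutes_inj[OF \<sigma>(1)]])
  also have "\<sigma> ` {1..<n+2} = {1..n+1}"
    using permutes_image[OF \<sigma>(1)] by (simp add: atLeastLessThanSuc_atLeastAtMost)
  finally have img: "\<sigma> ` {2..<n+2} = {1..n}"
    using \<sigma>(2) by auto
  have "\<sigma> b < \<sigma> 1" if "Suc 1 \<le> b" "b < n + 2" for b
  proof -
    have "\<sigma> b \<in> {1..n}" using img that by force
    then show ?thesis using \<sigma>(2) by simp
  qed
  then have "inversion_sign {1..<n+2} \<sigma> = (-1) ^ (n + 2 - Suc 1) * (inversion_sign {Suc 1..<n+2} \<sigma> :: 'k)"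
    by (intro inversion_sign_first_max) auto
  then have "inversion_sign {1..<n+2} \<sigma> = (-1) ^ n * (inversion_sign {2..<n+2} \<sigma> :: 'k)"
    by (simp add: numeral_2_eq_2)
  then have "inversion_sign {2..<n+2} \<sigma> = (of_int (sign \<sigma>) :: 'k)"
    using of_int_sign_eq_inversion_sign[of \<sigma> 1 "n+2", where 'a = 'k] \<sigma>(1) \<open>even n\<close>
    by (simp add: atLeastLessThanSuc_atLeastAtMost)
  moreover have "snd (snd (witness n (\<sigma> i))) = (gmonom 1 {\<sigma> i} :: 'k grass)" if "i \<in> {2..<n+2}" for i
    using img that by (intro snd_snd_witness) auto
  moreover have "2 * (n div 2) + 2 = n + 2" using \<open>even n\<close> by simp
  ultimately show ?thesis
    using snd_snd_pairprod[of \<sigma> "n div 2" "witness n :: nat \<Rightarrow> 'k utm"] inj img by simp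
qed

lemma snd_snd_pairprod_witness_last_inner:
  assumes \<sigma>: "\<sigma> permutes {1..n+1}" "\<sigma> 1 \<noteq> n + 1" and "even n"
  shows "snd (snd (pairprod (witness n) \<sigma> (n div 2))) = (gzero :: 'k::comm_ring_1 grass)"
proof -
  define k where "k = inv \<sigma> (n + 1)"
  have "\<sigma> k = n + 1" "k \<in> {1..n+1}"
    using permutes_inverses(1)[OF \<sigma>(1)] permutes_in_image[OF permutes_inv[OF \<sigma>(1)]]
    by (auto simp: k_def)
  define i where "i = (k - 2) div 2"
  have "k \<noteq> 1" using \<sigma>(2) \<open>\<sigma> k = n + 1\<close> by auto
  then have "i < n div 2" "k = 2*i+2 \<or> k = 2*i+3"
    using \<open>k \<in> {1..n+1}\<close> \<open>even n\<close> by (auto simp: i_def elim!: evenE)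
  have other: "snd (snd (witness n (\<sigma> p))) = (gmonom 1 {\<sigma> p} :: 'k grass)" if "p \<in> {1..n+1}" "p \<noteq> k" for p
  proof -
    have "\<sigma> p \<in> {1..n+1}" "\<sigma> p \<noteq> \<sigma> k"
      using that permutes_in_image[OF \<sigma>(1)] permutes_inj[OF \<sigma>(1)] by (auto dest: injD)
    then show ?thesis using \<open>\<sigma> k = n + 1\<close> by (intro snd_snd_witness) auto
  qed
  have last: "snd (snd (witness n (\<sigma> k))) = (gmonom 1 {1, 2} :: 'k grass)"
    using \<open>\<sigma> k = n + 1\<close> witness_last[of n, where 'k = 'k] by simp
  have "snd (snd (acomm (witness n (\<sigma> (2*i+2))) (witness n (\<sigma> (2*i+3))))) = (gzero :: 'k grass)"
    using \<open>k = 2*i+2 \<or> k = 2*i+3\<close>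
  proof
    assume "k = 2*i+2"
    moreover have "2*i+3 \<in> {1..n+1}" using \<open>i < n div 2\<close> \<open>even n\<close> by (auto elim!: evenE)
    ultimately show ?thesis
      using last other[of "2*i+3"] by (simp add: acomm_components gcomm_doubleton_singleton)
  next
    assume "k = 2*i+3"
    moreover have "2*i+2 \<in> {1..n+1}" using \<open>i < n div 2\<close> \<open>even n\<close> by (auto elim!: evenE)
    ultimately show ?thesis
      using last other[of "2*i+2"] by (simp add: acomm_components gcomm_doubleton_singleton)
  qed
  then show ?thesis using \<open>i < n div 2\<close> by (rule snd_snd_pairprod_gzero[rotated])
qed

lemma fst_snd_fval_summand_witness:
  assumes "2 \<le> n" "even n" "n + 2 \<le> m" and \<sigma>: "\<sigma> permutes {1..n+1}"
  shows "fst (snd (ascale (of_int (sign \<sigma>))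
            (amul (lcomm (witness n (\<sigma> 1)) (witness n 1) (m - n - 1)) (pairprod (witness n) \<sigma> (n div 2)))))
          {1..n} = (if \<sigma> 1 = n + 1 then - (2 ^ (n div 2)) else (0 :: 'k::comm_ring_1))"
proof -
  define L :: "'k utm" where "L = lcomm (witness n (\<sigma> 1)) (witness n 1) (m - n - 1)"
  define P :: "'k utm" where "P = pairprod (witness n) \<sigma> (n div 2)"
  have w1: "witness n 1 = (gmonom (-1) {}, gzero, gmonom 1 {1} :: 'k grass)"
    using assms(1) by (simp add: witness_var witness_gen_def)
  have "fst L = gzero"
    unfolding L_def using assms(3) w1 by (intro fst_lcomm_scalar[of _ _ "-1"]) auto
  then have top: "fst (snd (ascale (of_int (sign \<sigma>)) (amul L P))) {1..n}
      = of_int (sign \<sigma>) * gmul (fst (snd L)) (snd (snd P)) {1..n}"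
    by (simp add: fst_snd_ascale amul_components gscale_def)
  show ?thesis
  proof (cases "\<sigma> 1 = n + 1")
    case True
    have "fst (snd L) {} = -1"
      unfolding L_def True using w1 witness_last[of n, where 'k = 'k]
      by (simp add: fst_snd_lcomm_apply_empty gmonom_def)
    moreover have "snd (snd P) = gmonom (2 ^ (n div 2) * of_int (sign \<sigma>)) {1..n}"
      unfolding P_def by (rule snd_snd_pairprod_witness_last_first[OF \<sigma> True \<open>even n\<close>])
    ultimately have "fst (snd (ascale (of_int (sign \<sigma>)) (amul L P))) {1..n}
        = - (2 ^ (n div 2)) * (of_int (sign \<sigma>) * of_int (sign \<sigma>))"
      using top by (simp add: gmul_gmonom_apply_self ac_simps)
    also have "\<dots> = - (2 ^ (n div 2))"
      by (simp flip: of_int_mult)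
    finally show ?thesis using True by (simp add: L_def P_def)
  next
    case False
    have "snd (snd P) = gzero"
      unfolding P_def by (rule snd_snd_pairprod_witness_last_inner[OF \<sigma> False \<open>even n\<close>])
    then show ?thesis
      using top False by (simp add: L_def P_def)
  qed
qed

lemma fst_snd_fval_witness:
  assumes "2 \<le> n" "even n" "n + 2 \<le> m"
  shows "fst (snd (fval m n (witness n))) {1..n}
       = - (2 ^ (n div 2)) * (of_nat (card {\<sigma>. \<sigma> permutes {1..n+1} \<and> \<sigma> 1 = n + 1}) :: 'k::comm_ring_1)"
proof -
  have "fst (snd (fval m n (witness n))) {1..n}
      = (\<Sum>\<sigma>\<in>{\<sigma>. \<sigma> permutes {1..n+1}}. if \<sigma> 1 = n + 1 then - (2 ^ (n div 2)) else (0 :: 'k))"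
    unfolding fval_def asum_def fst_conv snd_conv
    using fst_snd_fval_summand_witness[OF assms, where 'k = 'k] by (intro sum.cong) auto
  also have "\<dots> = (\<Sum>\<sigma>\<in>{\<sigma>. \<sigma> permutes {1..n+1} \<and> \<sigma> 1 = n + 1}. - (2 ^ (n div 2)))"
    by (subst sum.inter_filter[symmetric]) (auto simp: finite_permutations intro: sum.cong)
  finally show ?thesis by simp
qed

theorem lemma3p7:
  fixes n m :: nat
  assumes "n \<ge> 2" and "even n" and "m \<ge> n + 2"
  shows "\<not> PI_of_FnA n (fval m n :: (nat \<Rightarrow> 'k::field_char_0 utm) \<Rightarrow> 'k utm)"
proof
  assume "PI_of_FnA n (fval m n :: (nat \<Rightarrow> 'k utm) \<Rightarrow> 'k utm)"
  moreover have "witness n = (\<lambda>j. nceval witness_gen (witness_poly n j) :: 'k utm)"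
    by (simp add: fun_eq_iff witness_def)
  ultimately have "fval m n (witness n) = (azero :: 'k utm)"
    using ncvars_witness_poly[OF assms(1)] witness_gen_in_Acar unfolding PI_of_FnA_def by metis
  then have "fst (snd (fval m n (witness n))) {1..n} = (0 :: 'k)"
    by (simp add: azero_def)
  define C where "C = {\<sigma>. \<sigma> permutes {1..n+1} \<and> \<sigma> 1 = n + 1}"
  have "finite C"
    unfolding C_def by (rule finite_subset[OF _ finite_permutations[of "{1..n+1}"]]) auto
  moreover have "transpose 1 (n + 1) \<in> C"
    unfolding C_def by (auto intro: permutes_swap_id)
  ultimately have "card C \<noteq> 0" by auto
  then have "fst (snd (fval m n (witness n))) {1..n} \<noteq> (0 :: 'k)"
    using fst_snd_fval_witness[OF assms, where 'k = 'k] by (simp add: C_def)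
  then show False using \<open>fst (snd (fval m n (witness n))) {1..n} = 0\<close> by contradiction
qed

end
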